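(* Let $X\in\mathbb{R}^{M\times N_f}$, $W\in\mathbb{R}^{N_f\times N_p}$, and $P_f=(W(XW)^+X)^T$. Then $P_f$ is an (oblique) projector, $P_f^2=P_f$, and for any singular value decomposition $P_f=\sum_{i:\sigma_i>0}\sigma_i\vec{f}_{X,i}\vec{f}_{W,i}^T$ (with $\{\vec{f}_{X,i}\}$ orthonormal, $\{\vec{f}_{W,i}\}$ orthonormal, $\sigma_i>0$) one has $\vec{f}_{W,i}\cdot\vec{f}_{X,j}=\delta_{ij}\cos\theta_i$ with $\cos\theta_i=1/\sigma_i$, so that $$P_f=\sum_i\frac{1}{\cos\theta_i}\vec{f}_{X,i}\vec{f}_{W,i}^T,$$ and all projection deviation angles satisfy $\delta\phi_i=0$.
   Context: $(XW)^+$ is the Moore–Penrose pseudoinverse. The subspace orientation angle $\theta_i\in[0,\pi]$ is defined by $\cos\theta_i=\vec{f}_{X,i}\cdot\vec{f}_{W,i}$. The projection deviation angle $\delta\phi_i$ is defined by $\cos(\pi/2-\delta\phi_i)=\frac{\vec{f}_{W,i}\cdot(\sigma_i\vec{f}_{X,i}-\vec{f}_{W,i})}{\|\sigma_i\vec{f}_{X,i}-\vec{f}_{W,i}\|}$; when $\sigma_i\vec{f}_{X,i}-\vec{f}_{W,i}=0$ (which happens when $\theta_i=0$) it is undefined and by convention taken to be $0$. *)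

theory Defs
  imports "HOL-Analysis.Analysis"
begin

text \<open>Moore--Penrose pseudoinverse, defined by the four Penrose conditions
  (it exists and is unique for every real matrix).\<close>
definition mp_pinv :: "real^'n^'m \<Rightarrow> real^'m^'n" where
  "mp_pinv A = (THE B. A ** B ** A = A \<and> B ** A ** B = B \<and>
                       transpose (A ** B) = A ** B \<and> transpose (B ** A) = B ** A)"

definition outer :: "real^'m \<Rightarrow> real^'n \<Rightarrow> real^'n^'m" where
  "outer u v = (\<chi> a b. u $ a * v $ b)"

definition orient_angle :: "real^'n \<Rightarrow> real^'n \<Rightarrow> real" where
  "orient_angle fX fW = arccos (fX \<bullet> fW)"

text \<open>Projection deviation angle: cos(pi/2 - dphi) = fW.(s fX - fW)/|s fX - fW|,
  with dphi in [-pi/2, pi/2]; taken to be 0 when s fX - fW = 0.\<close>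
definition proj_dev_angle :: "real \<Rightarrow> real^'n \<Rightarrow> real^'n \<Rightarrow> real" where
  "proj_dev_angle s fX fW =
     (if s *\<^sub>R fX - fW = 0 then 0
      else pi / 2 - arccos ((fW \<bullet> (s *\<^sub>R fX - fW)) / norm (s *\<^sub>R fX - fW)))"

end

theory Submission
  imports Defs
begin

(* Idempotence of Pf only needs the Penrose condition B (XW) B = B for B = (XW)^+.
   Writing Pf = \<Sum> \<sigma>_i fX_i fW_i^T, orthonormality of the fW gives Pf fW_l = \<sigma>_l fX_l,
   so Pf (Pf fW_l) = Pf fW_l becomes, after pairing with fX_k,
   \<sigma>_k \<sigma>_l (fW_k \<bullet> fX_l) = \<sigma>_l \<delta>_kl.  Hence fW_k \<bullet> fX_l = \<delta>_kl / \<sigma>_k, which is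
   cos \<theta>_k for k = l, and then fW_k \<bullet> (\<sigma>_k fX_k - fW_k) = 0, i.e. \<delta>\<phi>_k = 0. *)

lemma matrix_diff_ldistrib: "(A :: 'a::ring_1 ^'n^'m) ** (B - C) = A ** B - A ** C"
  by (simp add: vec_eq_iff matrix_matrix_mult_def sum_subtractf algebra_simps)

lemma inner_matrix_vector_transpose:
  fixes A :: "real^'n^'m"
  shows "(A *v x) \<bullet> y = x \<bullet> (transpose A *v y)"
  by (metis dot_lmul_matrix inner_commute transpose_matrix_vector)

lemma transpose_mul_self_eq_0_iff:
  fixes N :: "real^'n^'m"
  shows "transpose N ** N = 0 \<longleftrightarrow> N = 0"
proof
  assume N: "transpose N ** N = 0"
  have "N $ i $ j = 0" for i j
  proof -
    have "(\<Sum>k\<in>UNIV. (N $ k $ j)\<^sup>2) = (transpose N ** N) $ j $ j"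
      by (simp add: matrix_matrix_mult_def transpose_def power2_eq_square)
    then show ?thesis using N by (simp add: sum_nonneg_eq_0_iff)
  qed
  then show "N = 0" by (simp add: vec_eq_iff)
qed simp

lemma range_transpose_inter_kernel_eq_0:
  fixes M :: "real^'n^'m" and K :: "real^'k^'m"
  assumes "N = transpose M ** K" and "M ** N = 0"
  shows "N = 0"
proof -
  have "transpose N ** N = transpose K ** (M ** N)"
    unfolding assms(1) by (simp add: matrix_transpose_mul matrix_mul_assoc)
  then show ?thesis using assms(2) by (simp add: transpose_mul_self_eq_0_iff)
qed

lemma transpose_mult_vector_eq_0_if_orthogonal_range:
  fixes A :: "real^'n^'m"
  assumes "\<And>x. orthogonal y (A *v x)"
  shows "transpose A *v y = 0"
proof -
  have "(transpose A *v y) \<bullet> (transpose A *v y) = y \<bullet> (A *v (transpose A *v y))"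
    by (metis inner_commute inner_matrix_vector_transpose)
  also have "\<dots> = 0" using assms orthogonal_def by blast
  finally show ?thesis by (simp only: inner_eq_zero_iff)
qed

lemma range_plus_kernel_transpose_decomp:
  fixes A :: "real^'n^'m"
  obtains x y where "w = A *v x + y" and "transpose A *v y = 0"
proof -
  have span_range: "span (range ((*v) A)) = range ((*v) A)"
    by (metis span_linear_image matrix_vector_mul_linear span_UNIV)
  obtain x y where "w = A *v x + y" and "\<And>v. v \<in> range ((*v) A) \<Longrightarrow> orthogonal y v"
    using orthogonal_subspace_decomp_exists[of "range ((*v) A)" w] unfolding span_range
    by blast
  then show ?thesis
    using that transpose_mult_vector_eq_0_if_orthogonal_range[of y A] by blast
qed

lemma transpose_mul_self_transpose_solvable:
  fixes A :: "real^'n^'m"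
  obtains z where "(transpose A ** A ** transpose A) *v z = transpose A *v w"
proof -
  obtain x y where w: "w = A *v x + y" and y: "transpose A *v y = 0"
    using range_plus_kernel_transpose_decomp .
  obtain z n where x: "x = transpose A *v z + n" and n: "A *v n = 0"
    using range_plus_kernel_transpose_decomp[of x "transpose A"] by auto
  have "(transpose A ** A ** transpose A) *v z = transpose A *v (A *v (transpose A *v z))"
    by (simp only: matrix_vector_mul_assoc matrix_mul_assoc)
  also have "\<dots> = transpose A *v (A *v x)"
    using x n by (simp add: matrix_vector_right_distrib del: transpose_matrix_vector)
  also have "\<dots> = transpose A *v w"
    using w y by (simp add: matrix_vector_right_distrib)
  finally show ?thesis using that by blast
qed

lemma matrix_mul_solvable_if_columns_in_range:
  fixes M :: "'a::semiring_1^'n^'m" and B :: "'a^'k^'m"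
  assumes "\<And>j. \<exists>z. M *v z = column j B"
  obtains C where "M ** C = B"
proof -
  obtain z where z: "\<And>j. M *v z j = column j B" using assms by metis
  have "(M ** (\<chi> k j. z j $ k)) $ i $ j = B $ i $ j" for i j
  proof -
    have "(M ** (\<chi> k j. z j $ k)) $ i $ j = (M *v z j) $ i"
      by (simp add: matrix_matrix_mult_def matrix_vector_mult_def)
    then show ?thesis by (simp add: z column_def)
  qed
  then have "M ** (\<chi> k j. z j $ k) = B" by (simp add: vec_eq_iff)
  then show ?thesis by (rule that)
qed

lemma symmetric_if_transpose_mul_self_eq_transpose:
  fixes M :: "'a::comm_semiring_1^'n^'n"
  assumes "transpose M ** M = transpose M"
  shows "transpose M = M"
proof -
  have "M = transpose (transpose M ** M)" by (simp only: assms transpose_transpose)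
  also have "\<dots> = transpose M ** M" by (simp add: matrix_transpose_mul)
  also have "\<dots> = transpose M" by (rule assms)
  finally show ?thesis by (rule sym)
qed

definition penrose_conditions :: "real^'n^'m \<Rightarrow> real^'m^'n \<Rightarrow> bool" where
  "penrose_conditions A B \<longleftrightarrow> A ** B ** A = A \<and> B ** A ** B = B \<and>
     transpose (A ** B) = A ** B \<and> transpose (B ** A) = B ** A"

(* Take B = A^T C where A^T A A^T C = A^T, which is solvable because A^T A A^T and A^T
   have the same range.  Then A^T A B = A^T, and the four conditions follow because
   the range of A^T meets the kernel of A only in 0. *)
lemma penrose_conditions_solvable:
  fixes A :: "real^'n^'m"
  shows "\<exists>B. penrose_conditions A B"
proof -
  obtain C where C: "transpose A ** A ** transpose A ** C = transpose A"
  proof (rule matrix_mul_solvable_if_columns_in_range)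
    fix j
    obtain z where "(transpose A ** A ** transpose A) *v z = transpose A *v axis j 1"
      by (rule transpose_mul_self_transpose_solvable)
    then show "\<exists>z. (transpose A ** A ** transpose A) *v z = column j (transpose A)"
      by (metis matrix_vector_mult_basis)
  qed
  define B where "B = transpose A ** C"
  have normal: "transpose A ** A ** B = transpose A"
    using C by (simp add: B_def matrix_mul_assoc)
  have normal': "transpose B ** transpose A ** A = A"
  proof -
    have "transpose B ** transpose A ** A = transpose (transpose A ** A ** B)"
      by (simp add: matrix_transpose_mul matrix_mul_assoc)
    then show ?thesis by (simp only: normal transpose_transpose)
  qed
  have AB_sym: "transpose (A ** B) = A ** B"
  proof -
    have "A ** B = transpose B ** (transpose A ** A ** B)"
      using normal' by (simp add: matrix_mul_assoc)
    also have "\<dots> = transpose B ** transpose A" by (simp only: normal)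
    also have "\<dots> = transpose (A ** B)" by (simp only: matrix_transpose_mul)
    finally show ?thesis by (rule sym)
  qed
  have "A ** B ** A - A = 0"
  proof (rule range_transpose_inter_kernel_eq_0)
    show "A ** B ** A - A = transpose (transpose A) ** (B ** A - mat 1)"
      by (simp add: matrix_diff_ldistrib matrix_mul_assoc)
    show "transpose A ** (A ** B ** A - A) = 0"
      using normal by (simp add: matrix_diff_ldistrib matrix_mul_assoc)
  qed
  then have ABA: "A ** B ** A = A" by simp
  have BA_sym: "transpose (B ** A) = B ** A"
  proof (rule symmetric_if_transpose_mul_self_eq_transpose)
    have "transpose (B ** A) ** (B ** A) = transpose (C ** A) ** (A ** B ** A)"
      by (simp add: B_def matrix_transpose_mul matrix_mul_assoc)
    also have "\<dots> = transpose (C ** A) ** A" by (simp only: ABA)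
    also have "\<dots> = transpose (B ** A)"
      by (simp add: B_def matrix_transpose_mul matrix_mul_assoc)
    finally show "transpose (B ** A) ** (B ** A) = transpose (B ** A)" .
  qed
  have "B ** A ** B - B = 0"
  proof (rule range_transpose_inter_kernel_eq_0)
    show "B ** A ** B - B = transpose A ** (C ** A ** B - C)"
      by (simp add: B_def matrix_diff_ldistrib matrix_mul_assoc)
    show "A ** (B ** A ** B - B) = 0"
      using ABA by (simp add: matrix_diff_ldistrib matrix_mul_assoc)
  qed
  then have BAB: "B ** A ** B = B" by simp
  show ?thesis using AB_sym ABA BA_sym BAB by (auto simp: penrose_conditions_def)
qed

lemma penrose_conditions_unique:
  assumes "penrose_conditions A B" "penrose_conditions A C"
  shows "B = C"
proof -
  have B1: "A ** B ** A = A" and B2: "B ** A ** B = B"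
    and B3: "transpose (A ** B) = A ** B" and B4: "transpose (B ** A) = B ** A"
    using assms(1) by (auto simp: penrose_conditions_def)
  have C1: "A ** C ** A = A" and C2: "C ** A ** C = C"
    and C3: "transpose (A ** C) = A ** C" and C4: "transpose (C ** A) = C ** A"
    using assms(2) by (auto simp: penrose_conditions_def)
  have "B = B ** transpose (A ** B)" using B2 B3 by (simp add: matrix_mul_assoc)
  also have "\<dots> = B ** transpose B ** transpose A"
    by (simp add: matrix_transpose_mul matrix_mul_assoc)
  also have "\<dots> = B ** transpose B ** transpose (A ** C ** A)" using C1 by simp
  also have "\<dots> = B ** transpose (A ** B) ** transpose (A ** C)"
    by (simp add: matrix_transpose_mul matrix_mul_assoc)
  also have "\<dots> = B ** (A ** B ** A) ** C" using B3 C3 by (simp add: matrix_mul_assoc)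
  also have "\<dots> = B ** A ** C" using B1 by simp
  finally have B_eq: "B = B ** A ** C" .
  have "C = transpose (C ** A) ** C" using C2 C4 by (simp add: matrix_mul_assoc)
  also have "\<dots> = transpose A ** transpose C ** C"
    by (simp add: matrix_transpose_mul matrix_mul_assoc)
  also have "\<dots> = transpose (A ** B ** A) ** transpose C ** C" using B1 by simp
  also have "\<dots> = transpose (B ** A) ** transpose (C ** A) ** C"
    by (simp add: matrix_transpose_mul matrix_mul_assoc)
  also have "\<dots> = B ** (A ** C ** A) ** C" using B4 C4 by (simp add: matrix_mul_assoc)
  also have "\<dots> = B ** A ** C" using C1 by simp
  finally show ?thesis by (rule trans_sym[OF B_eq])
qed

lemma mp_pinv_penrose_conditions: "penrose_conditions A (mp_pinv A)"
proof -
  have "\<exists>!B. penrose_conditions A B"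
    using penrose_conditions_solvable penrose_conditions_unique by blast
  then show ?thesis unfolding mp_pinv_def penrose_conditions_def[symmetric] by (rule theI')
qed

lemma oblique_projector_idempotent:
  assumes "B ** (X ** W) ** B = B"
  shows "(W ** B ** X) ** (W ** B ** X) = W ** B ** X"
proof -
  have "(W ** B ** X) ** (W ** B ** X) = W ** (B ** (X ** W) ** B) ** X"
    by (simp add: matrix_mul_assoc)
  then show ?thesis by (simp only: assms)
qed

lemma transpose_idempotent:
  fixes P :: "'a::comm_semiring_1^'n^'n"
  assumes "P ** P = P"
  shows "transpose P ** transpose P = transpose P"
proof -
  have "transpose P ** transpose P = transpose (P ** P)" by (simp add: matrix_transpose_mul)
  then show ?thesis by (simp only: assms)
qed

lemma transpose_mp_pinv_projector_idempotent:
  fixes X :: "real^'f^'m" and W :: "real^'p^'f"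
  defines "P \<equiv> transpose (W ** mp_pinv (X ** W) ** X)"
  shows "P ** P = P"
  unfolding P_def
  using mp_pinv_penrose_conditions[of "X ** W"]
  by (intro transpose_idempotent oblique_projector_idempotent) (simp add: penrose_conditions_def)

lemma sum_outer_mult_vector:
  fixes u w :: "nat \<Rightarrow> real^'n"
  shows "(\<Sum>i<r. c i *\<^sub>R outer (u i) (w i)) *v v = (\<Sum>i<r. (c i * (w i \<bullet> v)) *\<^sub>R u i)"
  by (simp add: vec_eq_iff matrix_vector_mult_def outer_def inner_vec_def sum_distrib_left
      sum_distrib_right sum_component sum.swap[of _ UNIV] mult_ac)

lemma inner_orthonormal_sum:
  fixes f :: "nat \<Rightarrow> real^'n"
  assumes "\<And>i j. i < r \<Longrightarrow> j < r \<Longrightarrow> f i \<bullet> f j = (if i = j then 1 else 0)" "k < r"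
  shows "f k \<bullet> (\<Sum>i<r. a i *\<^sub>R f i) = a k"
  using assms by (simp add: inner_sum_right if_distrib[of "(*) _"] cong: if_cong)

lemma sum_outer_mult_orthonormal:
  fixes u w :: "nat \<Rightarrow> real^'n"
  assumes "\<And>i j. i < r \<Longrightarrow> j < r \<Longrightarrow> w i \<bullet> w j = (if i = j then 1 else 0)" "l < r"
  shows "(\<Sum>i<r. c i *\<^sub>R outer (u i) (w i)) *v w l = c l *\<^sub>R u l"
proof -
  have "(\<Sum>i<r. (c i * (w i \<bullet> w l)) *\<^sub>R u i) = (\<Sum>i<r. if i = l then c l *\<^sub>R u l else 0)"
    using assms by (intro sum.cong) auto
  then show ?thesis using assms(2) by (simp add: sum_outer_mult_vector)
qed

lemma idempotent_svd_cross_inner: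
  fixes u w :: "nat \<Rightarrow> real^'n" and c :: "nat \<Rightarrow> real" and r :: nat
  defines "P \<equiv> (\<Sum>i<r. c i *\<^sub>R outer (u i) (w i))"
  assumes onu: "\<And>i j. i < r \<Longrightarrow> j < r \<Longrightarrow> u i \<bullet> u j = (if i = j then 1 else 0)"
    and onw: "\<And>i j. i < r \<Longrightarrow> j < r \<Longrightarrow> w i \<bullet> w j = (if i = j then 1 else 0)"
    and nz: "\<And>i. i < r \<Longrightarrow> c i \<noteq> 0"
    and idem: "P ** P = P"
    and kl: "k < r" "l < r"
  shows "w k \<bullet> u l = (if k = l then 1 / c k else 0)"
proof -
  have Pw: "P *v w l = c l *\<^sub>R u l"
    unfolding P_def using onw kl(2) by (rule sum_outer_mult_orthonormal)
  have "P *v (P *v w l) = P *v w l"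
    using idem by (simp add: matrix_vector_mul_assoc)
  then have "(\<Sum>i<r. (c i * (w i \<bullet> (c l *\<^sub>R u l))) *\<^sub>R u i) = c l *\<^sub>R u l"
    unfolding Pw by (simp add: P_def sum_outer_mult_vector)
  then have "u k \<bullet> (\<Sum>i<r. (c i * (w i \<bullet> (c l *\<^sub>R u l))) *\<^sub>R u i) = u k \<bullet> (c l *\<^sub>R u l)"
    by simp
  then have "c k * (c l * (w k \<bullet> u l)) = c l * (if k = l then 1 else 0)"
    using inner_orthonormal_sum[OF onu kl(1)] onu[OF kl] by simp
  then show ?thesis using nz[OF kl(1)] nz[OF kl(2)] by (auto simp: field_simps)
qed

lemma cos_orient_angle:
  assumes "norm u = 1" "norm v = 1"
  shows "cos (orient_angle u v) = u \<bullet> v"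
proof -
  have "\<bar>u \<bullet> v\<bar> \<le> 1" using Cauchy_Schwarz_ineq2[of u v] assms by simp
  then show ?thesis by (simp add: orient_angle_def cos_arccos_abs)
qed

lemma proj_dev_angle_eq_0:
  assumes "fW \<bullet> (s *\<^sub>R fX - fW) = 0"
  shows "proj_dev_angle s fX fW = 0"
  using assms by (simp add: proj_dev_angle_def)

theorem theorem5:
  fixes X :: "real^'f^'m" and W :: "real^'p^'f"
    and r :: nat and \<sigma> :: "nat \<Rightarrow> real" and fX fW :: "nat \<Rightarrow> real^'f"
  defines "Pf \<equiv> transpose (W ** mp_pinv (X ** W) ** X)"
  assumes onX: "\<And>i j. i < r \<Longrightarrow> j < r \<Longrightarrow> fX i \<bullet> fX j = (if i = j then 1 else 0)"
    and onW: "\<And>i j. i < r \<Longrightarrow> j < r \<Longrightarrow> fW i \<bullet> fW j = (if i = j then 1 else 0)"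
    and pos: "\<And>i. i < r \<Longrightarrow> \<sigma> i > 0"
    and svd: "Pf = (\<Sum>i<r. \<sigma> i *\<^sub>R outer (fX i) (fW i))"
  shows "Pf ** Pf = Pf
    \<and> (\<forall>i<r. \<forall>j<r. fW i \<bullet> fX j = (if i = j then cos (orient_angle (fX i) (fW i)) else 0))
    \<and> (\<forall>i<r. cos (orient_angle (fX i) (fW i)) = 1 / \<sigma> i)
    \<and> Pf = (\<Sum>i<r. (1 / cos (orient_angle (fX i) (fW i))) *\<^sub>R outer (fX i) (fW i))
    \<and> (\<forall>i<r. proj_dev_angle (\<sigma> i) (fX i) (fW i) = 0)"
proof -
  have idem: "Pf ** Pf = Pf"
    unfolding Pf_def by (rule transpose_mp_pinv_projector_idempotent)
  have "\<And>i. i < r \<Longrightarrow> \<sigma> i \<noteq> 0" using pos by (metis less_irrefl)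
  then have cross: "fW i \<bullet> fX j = (if i = j then 1 / \<sigma> i else 0)" if "i < r" "j < r" for i j
    using idempotent_svd_cross_inner[OF onX onW _ _ that] idem unfolding svd by blast
  have cos: "cos (orient_angle (fX i) (fW i)) = 1 / \<sigma> i" if "i < r" for i
    using cos_orient_angle[of "fX i" "fW i"] cross[OF that that] onX[OF that that] onW[OF that that]
    by (simp add: norm_eq_sqrt_inner inner_commute)
  have "\<forall>i<r. \<forall>j<r. fW i \<bullet> fX j = (if i = j then cos (orient_angle (fX i) (fW i)) else 0)"
    using cross cos by simp
  moreover have "\<forall>i<r. cos (orient_angle (fX i) (fW i)) = 1 / \<sigma> i"
    using cos by blast
  moreover have "Pf = (\<Sum>i<r. (1 / cos (orient_angle (fX i) (fW i))) *\<^sub>R outer (fX i) (fW i))"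
    unfolding svd by (intro sum.cong) (auto simp: cos)
  moreover have "\<forall>i<r. proj_dev_angle (\<sigma> i) (fX i) (fW i) = 0"
  proof (intro allI impI proj_dev_angle_eq_0)
    fix i assume "i < r"
    then show "fW i \<bullet> (\<sigma> i *\<^sub>R fX i - fW i) = 0"
      using cross onW pos[OF \<open>i < r\<close>] by (simp add: inner_diff_right)
  qed
  ultimately show ?thesis using idem by (intro conjI)
qed

end
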